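(* Let $p,q\in\mathbb{N}$ be co-prime and $\theta=\tan^{-1}(p/q)$. Then the measure $\mu_\theta$ is singular with respect to Lebesgue measure.
   Context: Throughout, $p,q\in\mathbb{N}$ are co-prime with $p/q\in[0,1]$. Let $D=\{0,1,p/q\}$. The measure $\mu_\theta$ is the unique Borel probability measure on $\mathbb{R}$ satisfying $\mu_\theta(A)=\tfrac13\big(\mu_\theta(2A)+\mu_\theta(2A-1)+\mu_\theta(2A-p/q)\big)$ for all Borel $A$; equivalently, $\mu_\theta$ is the distribution of $\sum_{i\ge1}a_i2^{-i}$ where $a_1,a_2,\dots$ are i.i.d. uniformly distributed on $D$. (Equivalently, it is the push-forward of the natural uniform (fair Bernoulli) measure on the Sierpinski triangle with vertices $(0,0),(1,0),(0,1)$ under the projection $(x,y)\mapsto x+\frac pq y$.) *)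

theory Defs
  imports "HOL-Probability.Probability"
begin

text \<open>The three digits of D = {0, 1, p/q}, indexed by 0, 1, 2 (so that when p/q is 0 or 1
  the repeated digit correctly carries weight 2/3).\<close>
definition digit :: "nat \<Rightarrow> nat \<Rightarrow> nat \<Rightarrow> real" where
  "digit p q k = (if k = 0 then 0 else if k = 1 then 1 else real p / real q)"

definition mu :: "nat \<Rightarrow> nat \<Rightarrow> real measure" where
  "mu p q = distr (PiM UNIV (\<lambda>_::nat. uniform_count_measure {0::nat, 1, 2})) borel
              (\<lambda>a. \<Sum>i. digit p q (a i) / 2 ^ (Suc i))"

definition singular_lebesgue :: "real measure \<Rightarrow> bool" where
  "singular_lebesgue M \<longleftrightarrow>
     (\<exists>A \<in> sets borel. emeasure M A = 0 \<and> emeasure lborel (UNIV - A) = 0)"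

end

(*
  If X has law mu p q, then Y = q X = (SUM i. d_i / 2^(i+1)) with i.i.d. digits d_i uniform
  on {0, q, p}. Since 2^n Y is an integer plus a copy of Y built from the digits after
  position n, the sequence cos (2 pi 2^n Y + phi) is stationary with mean kappa(phi)
  (mean_cos below), and its correlations decay like 2^-|m-n|. Hence the sums
  L_N(x) = (SUM n<N. cos (2 pi 2^n q x + phi)) satisfy L_N ~ N kappa(phi) in mu-probability,
  with variance O(N), whereas the summands are orthogonal in L^2[0,1], so L_N = O(sqrt N)
  in Lebesgue measure. A phase with kappa(phi) \<noteq> 0 exists because E exp (2 pi i Y) is a
  product of the nonzero factors (1 + exp (2 pi i q/2^j) + exp (2 pi i p/2^j)) / 3 and of a
  factor with positive real part. Along N = 2^k both deviation probabilities are summable,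
  and Borel-Cantelli separates the two measures.
*)

theory Submission
  imports Defs
begin

lemma abs_cos_diff_le:
  fixes x y :: real
  shows "\<bar>cos x - cos y\<bar> \<le> \<bar>x - y\<bar>"
proof -
  have "\<bar>cos x - cos y\<bar> = 2 * \<bar>sin ((x + y) / 2)\<bar> * \<bar>sin ((y - x) / 2)\<bar>"
    by (simp add: cos_diff_cos abs_mult)
  also have "\<dots> \<le> 2 * 1 * \<bar>(y - x) / 2\<bar>"
    by (intro mult_mono abs_sin_x_le_abs_x) auto
  finally show ?thesis by simp
qed

lemma cos_two_pi_Ints_add:
  fixes z x :: real
  assumes "z \<in> \<int>"
  shows "cos (2 * pi * z + x) = cos x"
  using assms by (auto elim!: Ints_cases simp: cos_add)

lemma cos_two_pow_mult_eq_minus_half: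
  fixes x :: real
  assumes "cos x = - 1/2"
  shows "cos (2 ^ k * x) = - 1/2"
proof (induction k)
  case 0
  then show ?case using assms by simp
next
  case (Suc k)
  have "cos (2 ^ Suc k * x) = 2 * (cos (2 ^ k * x))\<^sup>2 - 1"
    by (simp add: cos_double_cos mult.assoc)
  then show ?case using Suc by (simp add: power2_eq_square)
qed

lemma cos_two_pi_dyadic_neq_minus_half: "cos (2 * pi * real m / 2 ^ k) \<noteq> - 1/2"
proof
  assume "cos (2 * pi * real m / 2 ^ k) = - 1/2"
  from cos_two_pow_mult_eq_minus_half[OF this, of k]
  have "cos (2 * pi * of_int (int m)) = - 1/2" by simp
  then show False using cos_int_2pin[of "int m"] by simp
qed

lemma one_add_cis_add_cis_eq_0_imp_cos:
  assumes "1 + cis a + cis b = 0"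
  shows "cos a = - 1/2"
proof -
  have re: "1 + cos a + cos b = 0" and im: "sin a + sin b = 0"
    using arg_cong[OF assms, of Re] arg_cong[OF assms, of Im] by simp_all
  have "(cos b)\<^sup>2 = (cos a)\<^sup>2"
    using im by (simp add: cos_squared_eq eq_neg_iff_add_eq_0[symmetric])
  moreover have "cos b = - 1 - cos a" using re by linarith
  ultimately have "(1 + cos a)\<^sup>2 = (cos a)\<^sup>2" by (simp add: power2_eq_square algebra_simps)
  then show ?thesis by (simp add: power2_eq_square algebra_simps)
qed

lemma sum_power_half_dist_le: "(\<Sum>n<N. (1/2::real) ^ (if m \<le> n then n - m else m - n)) \<le> 3"
proof -
  have bound: "(\<Sum>n<N. (1/2::real) ^ (if m \<le> n then n - m else m - n))
     \<le> (if N \<le> m then (1/2) ^ (m - N) else 3 - 2 * (1/2) ^ (N - m))"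
  proof (induction N)
    case (Suc N)
    consider "Suc N \<le> m" | "N = m" | "m < N" by linarith
    then show ?case
    proof cases
      case 1
      then have "m - N = Suc (m - Suc N)" by simp
      then show ?thesis using Suc 1 by simp
    next
      case 3
      then have "Suc N - m = Suc (N - m)" by simp
      then show ?thesis using Suc 3 by simp
    qed (use Suc in simp)
  qed simp
  show ?thesis
  proof (cases "N \<le> m")
    case True
    with bound show ?thesis using power_le_one[of "1/2::real" "m - N"] by simp
  next
    case False
    with bound have "(\<Sum>n<N. (1/2::real) ^ (if m \<le> n then n - m else m - n)) \<le> 3 - 2 * (1/2) ^ (N - m)"
      by simp
    then show ?thesis using zero_le_power[of "1/2::real" "N - m"] by linarith
  qed
qed

lemma has_integral_cos_two_pi_int:
  fixes k :: int
  shows "((\<lambda>x. cos (2 * pi * of_int k * x + \<psi>)) has_integral (if k = 0 then cos \<psi> else 0)) {0..1}"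
proof (cases "k = 0")
  case True
  then show ?thesis using has_integral_const_real[of "cos \<psi>" 0 1] by simp
next
  case False
  define F where "F x = sin (2 * pi * of_int k * x + \<psi>) / (2 * pi * of_int k)" for x :: real
  have "(F has_vector_derivative cos (2 * pi * of_int k * x + \<psi>)) (at x within {0..1})" for x
  proof -
    have "(F has_real_derivative cos (2 * pi * of_int k * x + \<psi>) * (2 * pi * of_int k * 1 + 0)
        / (2 * pi * of_int k)) (at x within {0..1})"
      unfolding F_def using False by (intro derivative_eq_intros) auto
    then show ?thesis using False by (simp add: has_real_derivative_iff_has_vector_derivative)
  qed
  moreover have "F 1 - F 0 = 0"
    unfolding F_def
    by (simp add: sin_add sin_int_2pin cos_int_2pin mult.assoc[symmetric] diff_divide_distrib[symmetric])
  ultimately show ?thesis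
    using fundamental_theorem_of_calculus[of 0 1 F] False by simp
qed

lemma has_integral_cos_mult_cos:
  fixes j k :: nat
  assumes "0 < j" "0 < k"
  shows "((\<lambda>x. cos (2 * pi * real j * x + \<phi>) * cos (2 * pi * real k * x + \<phi>))
           has_integral (if j = k then 1/2 else 0)) {0..1}"
proof -
  have product: "(\<lambda>x. cos (2 * pi * real j * x + \<phi>) * cos (2 * pi * real k * x + \<phi>))
      = (\<lambda>x. (cos (2 * pi * of_int (int j - int k) * x + 0)
               + cos (2 * pi * of_int (int j + int k) * x + 2 * \<phi>)) * (1/2))"
    by (rule ext) (simp add: cos_times_cos algebra_simps)
  have integral_value: "((if int j - int k = 0 then cos 0 else 0) + (if int j + int k = 0 then cos (2 * \<phi>) else 0)) * (1/2)
      = (if j = k then 1/2 else 0 :: real)"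
    using assms by simp
  show ?thesis
    unfolding product integral_value[symmetric]
    by (intro has_integral_mult_left has_integral_add has_integral_cos_two_pi_int)
qed

lemma has_integral_cos_sum_squared:
  fixes k :: "nat \<Rightarrow> nat"
  assumes inj: "inj_on k {..<N}" and pos: "\<And>n. n < N \<Longrightarrow> 0 < k n"
  shows "((\<lambda>x. (\<Sum>n<N. cos (2 * pi * real (k n) * x + \<phi>))\<^sup>2) has_integral real N / 2) {0..1}"
proof -
  have "((\<lambda>x. \<Sum>m<N. \<Sum>n<N. cos (2 * pi * real (k m) * x + \<phi>) * cos (2 * pi * real (k n) * x + \<phi>))
      has_integral (\<Sum>m<N. \<Sum>n<N. if k m = k n then 1/2 else 0)) {0..1}"
    using pos by (intro has_integral_sum finite_lessThan has_integral_cos_mult_cos) auto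
  moreover have "(\<Sum>n<N. if k m = k n then 1/2 else 0) = (\<Sum>n<N. if m = n then 1/2 else 0::real)"
    if "m < N" for m
    using inj that by (intro sum.cong) (auto dest: inj_onD)
  ultimately show ?thesis
    by (simp add: power2_eq_square sum_product)
qed

lemma measure_cos_sum_squared_ge_le:
  fixes k :: "nat \<Rightarrow> nat"
  assumes "inj_on k {..<N}" "\<And>n. n < N \<Longrightarrow> 0 < k n" and "0 < t"
  shows "measure lborel {x \<in> {0..1}. t \<le> (\<Sum>n<N. cos (2 * pi * real (k n) * x + \<phi>))\<^sup>2} \<le> real N / (2 * t)"
proof -
  let ?L = "\<lambda>x. (\<Sum>n<N. cos (2 * pi * real (k n) * x + \<phi>))\<^sup>2"
  have int: "set_integrable lborel {0..1} ?L"
    by (intro borel_integrable_atLeastAtMost' continuous_intros)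
  have integral_L: "(LINT x:{0..1}|lborel. ?L x) = real N / 2"
    using set_borel_integral_eq_integral(2)[OF int]
      integral_unique[OF has_integral_cos_sum_squared[OF assms(1,2)]] by simp
  have "measure lborel {x \<in> {0..1}. t \<le> ?L x} \<le> (LINT x:{0..1}|lborel. ?L x) / t"
    by (rule integral_Markov_inequality'_measure[OF int]) (use \<open>0 < t\<close> in auto)
  then show ?thesis
    unfolding integral_L by simp
qed

lemma singular_lebesgueI_summable:
  fixes M :: "real measure" and A :: "nat \<Rightarrow> real set"
  assumes sets_M: "sets M = sets borel" and "finite_measure M"
    and A: "\<And>k. A k \<in> sets borel" "\<And>k. emeasure lborel (A k) < \<infinity>"
    and summable_lborel: "summable (\<lambda>k. measure lborel (A k))"
    and summable_M: "summable (\<lambda>k. measure M (- A k))"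
  shows "singular_lebesgue M"
proof -
  have null_lborel: "limsup A \<in> null_sets lborel"
    using A summable_lborel by (intro borel_cantelli_limsup1) auto
  have null_M: "limsup (\<lambda>k. - A k) \<in> null_sets M"
    using A summable_M sets_M finite_measure.emeasure_finite[OF \<open>finite_measure M\<close>]
    by (intro borel_cantelli_limsup1) (auto simp: less_top)
  have "- limsup A \<subseteq> limsup (\<lambda>k. - A k)"
    by (auto simp: limsup_INF_SUP) (metis atLeast_iff max.cobounded1 max.cobounded2)
  moreover have "- limsup A \<in> sets borel"
    using null_lborel by auto
  ultimately have "- limsup A \<in> null_sets M"
    using null_M sets_M by (auto intro: null_sets_subset)
  then have "emeasure M (- limsup A) = 0"
    by auto
  moreover have "emeasure lborel (UNIV - - limsup A) = 0"
    using null_lborel by auto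
  ultimately show ?thesis
    unfolding singular_lebesgue_def using \<open>- limsup A \<in> sets borel\<close> by blast
qed

lemma (in pair_sigma_finite)
  fixes f :: "'a \<Rightarrow> 'c::{real_normed_field, banach, second_countable_topology}"
  assumes f: "integrable M1 f" and g: "integrable M2 g"
  shows integrable_mult_pair_measure: "integrable (M1 \<Otimes>\<^sub>M M2) (\<lambda>(x, y). f x * g y)"
    and integral_mult_pair_measure: "(\<integral>(x, y). f x * g y \<partial>(M1 \<Otimes>\<^sub>M M2)) = integral\<^sup>L M1 f * integral\<^sup>L M2 g"
proof -
  have [measurable]: "f \<in> borel_measurable M1" "g \<in> borel_measurable M2"
    using f g by auto
  show int: "integrable (M1 \<Otimes>\<^sub>M M2) (\<lambda>(x, y). f x * g y)"
  proof (rule Fubini_integrable)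
    show "integrable M1 (\<lambda>x. \<integral>y. norm ((\<lambda>(x, y). f x * g y) (x, y)) \<partial>M2)"
      using f by (simp add: norm_mult)
  qed (use g in auto)
  show "(\<integral>(x, y). f x * g y \<partial>(M1 \<Otimes>\<^sub>M M2)) = integral\<^sup>L M1 f * integral\<^sup>L M2 g"
    using integral_fst[of "\<lambda>x y. f x * g y"] int by simp
qed

lemma (in prob_space) abs_integral_diff_le:
  fixes f g :: "'a \<Rightarrow> real"
  assumes "integrable M f" "integrable M g" and close: "\<And>x. x \<in> space M \<Longrightarrow> \<bar>f x - g x\<bar> \<le> \<delta>"
  shows "\<bar>integral\<^sup>L M f - integral\<^sup>L M g\<bar> \<le> \<delta>"
proof -
  have "\<bar>integral\<^sup>L M f - integral\<^sup>L M g\<bar> = \<bar>\<integral>x. f x - g x \<partial>M\<bar>"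
    using assms by simp
  also have "\<dots> \<le> (\<integral>x. \<bar>f x - g x\<bar> \<partial>M)"
    by (rule integral_abs_bound)
  also have "\<dots> \<le> (\<integral>x. \<delta> \<partial>M)"
    using assms by (intro integral_mono) auto
  finally show ?thesis
    by (simp add: prob_space)
qed

lemma (in prob_space) abs_integral_le:
  fixes f :: "'a \<Rightarrow> real"
  assumes "f \<in> borel_measurable M" and bound: "\<And>x. x \<in> space M \<Longrightarrow> \<bar>f x\<bar> \<le> B"
  shows "\<bar>integral\<^sup>L M f\<bar> \<le> B"
proof -
  have "integrable M f"
    using assms by (intro integrable_const_bound[where B=B]) auto
  then show ?thesis
    using abs_integral_diff_le[of f "\<lambda>_. 0" B] bound by simp
qed

lemma (in pair_prob_space) integral_pair_measure_fst:
  fixes f :: "'a \<Rightarrow> 'c::{real_normed_field, banach, second_countable_topology}"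
  assumes "integrable M1 f"
  shows "(\<integral>(x, y). f x \<partial>(M1 \<Otimes>\<^sub>M M2)) = integral\<^sup>L M1 f"
  using integral_mult_pair_measure[of f "\<lambda>_. 1"] assms by (simp add: M2.prob_space)

lemma (in pair_prob_space) integral_pair_measure_snd:
  fixes g :: "'b \<Rightarrow> 'c::{real_normed_field, banach, second_countable_topology}"
  assumes "integrable M2 g"
  shows "(\<integral>(x, y). g y \<partial>(M1 \<Otimes>\<^sub>M M2)) = integral\<^sup>L M2 g"
  using integral_mult_pair_measure[of "\<lambda>_. 1" g] assms by (simp add: M1.prob_space)

lemma (in pair_prob_space) abs_integral_mult_sub_le:
  fixes G :: "'a \<Rightarrow> 'b \<Rightarrow> real" and A :: "'a \<Rightarrow> real" and C :: "'b \<Rightarrow> real"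
  assumes [measurable]: "case_prod G \<in> borel_measurable (M1 \<Otimes>\<^sub>M M2)"
    "A \<in> borel_measurable M1" "C \<in> borel_measurable M2"
    and bounded: "\<And>x y. \<bar>G x y\<bar> \<le> 1" "\<And>y. \<bar>C y\<bar> \<le> 1"
    and close: "\<And>x y. \<bar>G x y - A x\<bar> \<le> \<delta>"
  shows "\<bar>(\<integral>(x, y). G x y * C y \<partial>(M1 \<Otimes>\<^sub>M M2)) - (\<integral>(x, y). G x y \<partial>(M1 \<Otimes>\<^sub>M M2)) * integral\<^sup>L M2 C\<bar>
    \<le> 2 * \<delta>"
proof -
  have "\<bar>A x\<bar> \<le> 1 + \<delta>" for x
    using bounded(1)[of x undefined] close[of x undefined] by linarith
  then have int_A: "integrable M1 A"
    by (intro M1.integrable_const_bound[where B="1 + \<delta>"]) auto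
  have int_C: "integrable M2 C"
    using bounded by (intro M2.integrable_const_bound[where B=1]) auto
  have int_G: "integrable (M1 \<Otimes>\<^sub>M M2) (\<lambda>(x, y). G x y)"
    using bounded by (intro integrable_const_bound[where B=1]) (auto simp: case_prod_beta')
  have int_GC: "integrable (M1 \<Otimes>\<^sub>M M2) (\<lambda>(x, y). G x y * C y)"
    using bounded by (intro integrable_const_bound[where B=1])
      (auto simp: case_prod_beta' abs_mult intro!: AE_I2 mult_le_one)
  have GC_close: "\<bar>G x y * C y - A x * C y\<bar> \<le> \<delta>" for x y
  proof -
    have "\<bar>G x y * C y - A x * C y\<bar> = \<bar>G x y - A x\<bar> * \<bar>C y\<bar>"
      by (simp add: abs_mult[symmetric] left_diff_distrib)
    also have "\<dots> \<le> \<delta> * 1"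
      using close bounded(2) by (intro mult_mono) (auto intro: order_trans[OF abs_ge_zero])
    finally show ?thesis by simp
  qed
  define IGC IG IA IC where "IGC = (\<integral>(x, y). G x y * C y \<partial>(M1 \<Otimes>\<^sub>M M2))"
    and "IG = (\<integral>(x, y). G x y \<partial>(M1 \<Otimes>\<^sub>M M2))" and "IA = integral\<^sup>L M1 A" and "IC = integral\<^sup>L M2 C"
  have GC_AC: "\<bar>IGC - IA * IC\<bar> \<le> \<delta>"
    using abs_integral_diff_le[OF int_GC integrable_mult_pair_measure[OF int_A int_C]] GC_close
    by (auto simp: IGC_def IA_def IC_def integral_mult_pair_measure[OF int_A int_C] split: prod.splits)
  have G_A: "\<bar>IG - IA\<bar> \<le> \<delta>"
  proof -
    have "integrable (M1 \<Otimes>\<^sub>M M2) (\<lambda>(x, y). A x)"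
      using integrable_mult_pair_measure[of A "\<lambda>_. 1"] int_A by simp
    from abs_integral_diff_le[OF int_G this] close show ?thesis
      by (auto simp: IG_def IA_def integral_pair_measure_fst[OF int_A] split: prod.splits)
  qed
  have "\<bar>IC\<bar> \<le> 1"
    unfolding IC_def using bounded(2) by (intro M2.abs_integral_le) auto
  have "\<bar>IGC - IG * IC\<bar> = \<bar>(IGC - IA * IC) + IC * (IA - IG)\<bar>"
    by (simp add: algebra_simps)
  also have "\<dots> \<le> \<bar>IGC - IA * IC\<bar> + \<bar>IC\<bar> * \<bar>IA - IG\<bar>"
    by (simp add: abs_mult[symmetric] abs_triangle_ineq)
  also have "\<dots> \<le> \<delta> + 1 * \<delta>"
    using GC_AC G_A \<open>\<bar>IC\<bar> \<le> 1\<close> by (intro add_mono mult_mono) (auto simp: abs_minus_commute)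
  finally show ?thesis
    by (simp add: IGC_def IG_def IC_def)
qed

lemma borel_measurable_cis [measurable]: "cis \<in> borel_measurable borel"
  unfolding cis_conv_exp by (intro borel_measurable_continuous_onI continuous_intros)

lemma (in finite_measure) integrable_cos_comp:
  fixes f :: "'a \<Rightarrow> real"
  assumes [measurable]: "f \<in> borel_measurable M"
  shows "integrable M (\<lambda>x. cos (f x))"
proof (rule integrable_const_bound[where B=1])
  show "AE x in M. norm (cos (f x)) \<le> 1"
    by (intro AE_I2) simp
qed measurable

lemma (in finite_measure) integrable_cos_mult_cos_comp:
  fixes f g :: "'a \<Rightarrow> real"
  assumes [measurable]: "f \<in> borel_measurable M" "g \<in> borel_measurable M"
  shows "integrable M (\<lambda>x. cos (f x) * cos (g x))"
proof (rule integrable_const_bound[where B=1])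
  show "AE x in M. norm (cos (f x) * cos (g x)) \<le> 1"
    by (intro AE_I2) (simp add: abs_mult mult_le_one)
qed measurable

lemma (in finite_measure) integrable_cis_comp:
  fixes f :: "'a \<Rightarrow> real"
  assumes [measurable]: "f \<in> borel_measurable M"
  shows "integrable M (\<lambda>x. cis (f x))"
proof (rule integrable_const_bound[where B=1])
  show "AE x in M. norm (cis (f x)) \<le> 1"
    by (intro AE_I2) simp
qed measurable

lemma (in prob_space) integral_cis_neq_0:
  assumes [measurable]: "f \<in> borel_measurable M"
    and small: "\<And>x. x \<in> space M \<Longrightarrow> \<bar>f x\<bar> \<le> a" and "a < pi / 2"
  shows "(\<integral>x. cis (f x) \<partial>M) \<noteq> 0"
proof -
  obtain x0 where "x0 \<in> space M"
    using not_empty by blast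
  then have "0 < cos a"
    using small[of x0] \<open>a < pi / 2\<close> by (intro cos_gt_zero_pi) auto
  have "cos a \<le> cos (f x)" if "x \<in> space M" for x
  proof -
    have "cos a \<le> cos \<bar>f x\<bar>"
      using small[OF that] \<open>a < pi / 2\<close> pi_gt_zero by (intro cos_monotone_0_pi_le) auto
    then show ?thesis by simp
  qed
  then have "cos a \<le> (\<integral>x. cos (f x) \<partial>M)"
    using integral_mono[of M "\<lambda>_. cos a" "\<lambda>x. cos (f x)"] integrable_cos_comp[of f]
    by (simp add: prob_space)
  also have "(\<integral>x. cos (f x) \<partial>M) = Re (\<integral>x. cis (f x) \<partial>M)"
  proof -
    have "integrable M (\<lambda>x. cis (f x))"
      by (rule integrable_cis_comp) simp
    then show ?thesis
      using integral_Re[of M "\<lambda>x. cis (f x)"] by simp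
  qed
  finally show ?thesis
    using \<open>0 < cos a\<close> by auto
qed

lemma (in sequence_space) pair_prob_space_S_S: "pair_prob_space S S"
  by (simp add: pair_prob_space_def pair_sigma_finite_def prob_space_axioms prob_space_imp_sigma_finite)

lemma (in sequence_space) pair_prob_space_M_S: "pair_prob_space M S"
  by (simp add: pair_prob_space_def pair_sigma_finite_def M.prob_space_axioms prob_space_axioms
      prob_space_imp_sigma_finite)

lemma (in sequence_space) integral_comb_seq:
  fixes f :: "(nat \<Rightarrow> 'a) \<Rightarrow> 'b::{banach, second_countable_topology}"
  assumes "f \<in> borel_measurable S"
  shows "integral\<^sup>L S f = (\<integral>(\<omega>, \<omega>'). f (comb_seq n \<omega> \<omega>') \<partial>(S \<Otimes>\<^sub>M S))"
  using integral_distr[OF measurable_comb_seq assms, of n]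
  unfolding PiM_comb_seq by (simp add: case_prod_beta')

lemma (in sequence_space) integral_case_nat:
  fixes f :: "(nat \<Rightarrow> 'a) \<Rightarrow> 'b::{banach, second_countable_topology}"
  assumes "f \<in> borel_measurable S"
  shows "integral\<^sup>L S f = (\<integral>(x, \<omega>). f (case_nat x \<omega>) \<partial>(M \<Otimes>\<^sub>M S))"
proof -
  have "(\<lambda>(x, \<omega>). case_nat x \<omega>) \<in> measurable (M \<Otimes>\<^sub>M S) S"
    unfolding case_prod_beta' by measurable
  from integral_distr[OF this assms] show ?thesis
    unfolding PiM_iter by (simp add: case_prod_beta')
qed

locale dyadic_expansion = sequence_space M for M :: "'a measure" +
  fixes d :: "'a \<Rightarrow> real" and c :: nat
  assumes borel_measurable_d [measurable]: "d \<in> borel_measurable M"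
    and d_Ints: "\<And>x. d x \<in> \<int>" and d_nonneg: "\<And>x. 0 \<le> d x" and d_le: "\<And>x. d x \<le> c"
    and c_pos: "0 < c"
begin

definition expansion :: "(nat \<Rightarrow> 'a) \<Rightarrow> real" where
  "expansion \<omega> = (\<Sum>i. d (\<omega> i) / 2 ^ Suc i)"

definition expansion_prefix :: "nat \<Rightarrow> (nat \<Rightarrow> 'a) \<Rightarrow> real" where
  "expansion_prefix n \<omega> = (\<Sum>i<n. d (\<omega> i) / 2 ^ Suc i)"

lemma summable_geometric_half_Suc: "summable (\<lambda>i. real c * (1/2::real) ^ Suc i)"
  by (intro summable_mult summable_Suc_iff[THEN iffD2] summable_geometric) simp

lemma summable_expansion: "summable (\<lambda>i. d (\<omega> i) / 2 ^ Suc i)"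
  using d_nonneg d_le
  by (intro summable_comparison_test'[OF summable_geometric_half_Suc])
     (simp add: power_divide divide_right_mono)

lemma expansion_nonneg: "0 \<le> expansion \<omega>"
  unfolding expansion_def by (intro suminf_nonneg summable_expansion) (simp add: d_nonneg)

lemma expansion_le: "expansion \<omega> \<le> c"
proof -
  have "expansion \<omega> \<le> (\<Sum>i. real c * (1/2) ^ Suc i)"
    unfolding expansion_def using d_le
    by (intro suminf_le summable_expansion summable_geometric_half_Suc)
       (simp add: power_divide divide_right_mono)
  also have "\<dots> = c"
    using sums_mult[OF power_half_series, of "real c"] by (simp add: sums_iff)
  finally show ?thesis .
qed

lemma borel_measurable_expansion [measurable]: "expansion \<in> borel_measurable S"
  unfolding expansion_def[abs_def] by measurable

lemma borel_measurable_expansion_prefix [measurable]: "expansion_prefix n \<in> borel_measurable S"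
  unfolding expansion_prefix_def[abs_def] by measurable

lemma expansion_comb_seq:
  "expansion (comb_seq n \<omega> \<omega>') = expansion_prefix n \<omega> + expansion \<omega>' / 2 ^ n"
proof -
  have "expansion (comb_seq n \<omega> \<omega>') = (\<Sum>i. d (comb_seq n \<omega> \<omega>' (i + n)) / 2 ^ Suc (i + n))
        + (\<Sum>i<n. d (comb_seq n \<omega> \<omega>' i) / 2 ^ Suc i)"
    unfolding expansion_def by (rule suminf_split_initial_segment[OF summable_expansion])
  also have "(\<Sum>i<n. d (comb_seq n \<omega> \<omega>' i) / 2 ^ Suc i) = expansion_prefix n \<omega>"
    unfolding expansion_prefix_def by (intro sum.cong) (auto simp: comb_seq_less)
  also have "(\<Sum>i. d (comb_seq n \<omega> \<omega>' (i + n)) / 2 ^ Suc (i + n)) = (\<Sum>i. (d (\<omega>' i) / 2 ^ Suc i) / 2 ^ n)"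
    by (intro suminf_cong) (simp add: comb_seq_add power_add)
  also have "\<dots> = expansion \<omega>' / 2 ^ n"
    unfolding expansion_def by (rule suminf_divide[OF summable_expansion])
  finally show ?thesis by simp
qed

lemma two_pow_mult_expansion_prefix_Ints: "2 ^ n * expansion_prefix n \<omega> \<in> \<int>"
proof (induction n)
  case (Suc n)
  have "2 ^ Suc n * expansion_prefix (Suc n) \<omega> = 2 * (2 ^ n * expansion_prefix n \<omega>) + d (\<omega> n)"
    by (simp add: expansion_prefix_def algebra_simps)
  then show ?case
    using Suc d_Ints by simp
qed (simp add: expansion_prefix_def)

lemma expansion_prefix_Suc_case_nat:
  "expansion_prefix (Suc n) (case_nat x \<omega>) = d x / 2 + expansion_prefix n \<omega> / 2"
  unfolding expansion_prefix_def
  by (subst sum.lessThan_Suc_shift) (simp add: sum_divide_distrib)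

lemma cos_expansion_comb_seq:
  "cos (2 * pi * 2 ^ n * expansion (comb_seq n \<omega> \<omega>') + \<phi>) = cos (2 * pi * expansion \<omega>' + \<phi>)"
proof -
  have argument: "2 * pi * 2 ^ n * expansion (comb_seq n \<omega> \<omega>') + \<phi>
      = 2 * pi * (2 ^ n * expansion_prefix n \<omega>) + (2 * pi * expansion \<omega>' + \<phi>)"
    by (simp add: expansion_comb_seq algebra_simps)
  show ?thesis
    unfolding argument by (rule cos_two_pi_Ints_add[OF two_pow_mult_expansion_prefix_Ints])
qed

definition mean_cos :: "real \<Rightarrow> real" where
  "mean_cos \<phi> = (\<integral>\<omega>. cos (2 * pi * expansion \<omega> + \<phi>) \<partial>S)"

lemma integral_cos_two_pow_expansion:
  "(\<integral>\<omega>. cos (2 * pi * 2 ^ n * expansion \<omega> + \<phi>) \<partial>S) = mean_cos \<phi>"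
proof -
  interpret SS: pair_prob_space S S
    by (rule pair_prob_space_S_S)
  have "(\<integral>\<omega>. cos (2 * pi * 2 ^ n * expansion \<omega> + \<phi>) \<partial>S)
      = (\<integral>(\<omega>, \<omega>'). cos (2 * pi * expansion \<omega>' + \<phi>) \<partial>(S \<Otimes>\<^sub>M S))"
    by (subst integral_comb_seq[where n=n]) (simp_all add: cos_expansion_comb_seq)
  also have "\<dots> = mean_cos \<phi>"
    unfolding mean_cos_def by (intro SS.integral_pair_measure_snd P.integrable_cos_comp) simp
  finally show ?thesis .
qed

lemma abs_integral_cos_mult_cos_sub_le:
  assumes "m \<le> n"
  shows "\<bar>(\<integral>\<omega>. cos (2 * pi * 2 ^ m * expansion \<omega> + \<phi>) * cos (2 * pi * 2 ^ n * expansion \<omega> + \<phi>) \<partial>S)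
           - (mean_cos \<phi>)\<^sup>2\<bar> \<le> 4 * pi * c / 2 ^ (n - m)"
proof -
  interpret SS: pair_prob_space S S
    by (rule pair_prob_space_S_S)
  define G where "G \<omega> \<omega>' = cos (2 * pi * 2 ^ m * expansion (comb_seq n \<omega> \<omega>') + \<phi>)" for \<omega> \<omega>'
  define A where "A \<omega> = cos (2 * pi * 2 ^ m * expansion_prefix n \<omega> + \<phi>)" for \<omega>
  define C where "C \<omega>' = cos (2 * pi * expansion \<omega>' + \<phi>)" for \<omega>'
  have [measurable]: "case_prod G \<in> borel_measurable (S \<Otimes>\<^sub>M S)" "A \<in> borel_measurable S"
    "C \<in> borel_measurable S"
    unfolding G_def A_def C_def by measurable
  have close: "\<bar>G \<omega> \<omega>' - A \<omega>\<bar> \<le> 2 * pi * c / 2 ^ (n - m)" for \<omega> \<omega>'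
  proof -
    have "(2::real) ^ n = 2 ^ m * 2 ^ (n - m)"
      using \<open>m \<le> n\<close> by (simp flip: power_add)
    then have "(2 * pi * 2 ^ m * expansion (comb_seq n \<omega> \<omega>') + \<phi>) - (2 * pi * 2 ^ m * expansion_prefix n \<omega> + \<phi>)
        = 2 * pi * (expansion \<omega>' / 2 ^ (n - m))"
      by (simp add: expansion_comb_seq algebra_simps)
    then have "\<bar>G \<omega> \<omega>' - A \<omega>\<bar> \<le> \<bar>2 * pi * (expansion \<omega>' / 2 ^ (n - m))\<bar>"
      unfolding G_def A_def by (metis abs_cos_diff_le)
    also have "\<dots> \<le> 2 * pi * c / 2 ^ (n - m)"
      using expansion_nonneg[of \<omega>'] expansion_le[of \<omega>'] by (simp add: divide_right_mono)
    finally show ?thesis .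
  qed
  have "(\<integral>\<omega>. cos (2 * pi * 2 ^ m * expansion \<omega> + \<phi>) * cos (2 * pi * 2 ^ n * expansion \<omega> + \<phi>) \<partial>S)
      = (\<integral>(\<omega>, \<omega>'). G \<omega> \<omega>' * C \<omega>' \<partial>(S \<Otimes>\<^sub>M S))"
    by (subst integral_comb_seq[where n=n]) (simp_all add: G_def C_def cos_expansion_comb_seq)
  moreover have "mean_cos \<phi> = (\<integral>(\<omega>, \<omega>'). G \<omega> \<omega>' \<partial>(S \<Otimes>\<^sub>M S))"
    unfolding G_def integral_cos_two_pow_expansion[of m, symmetric]
    by (rule integral_comb_seq) simp
  moreover have "mean_cos \<phi> = integral\<^sup>L S C"
    by (simp add: mean_cos_def C_def[abs_def])
  ultimately show ?thesis
    using SS.abs_integral_mult_sub_le[of G A C, OF _ _ _ _ _ close]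
    by (simp add: G_def C_def power2_eq_square)
qed

lemma integral_centered_cos_mult_le:
  "(\<integral>\<omega>. (cos (2 * pi * 2 ^ m * expansion \<omega> + \<phi>) - mean_cos \<phi>)
          * (cos (2 * pi * 2 ^ n * expansion \<omega> + \<phi>) - mean_cos \<phi>) \<partial>S)
     \<le> 4 * pi * c * (1/2) ^ (if m \<le> n then n - m else m - n)"
proof -
  define cm cn where "cm \<omega> = cos (2 * pi * 2 ^ m * expansion \<omega> + \<phi>)"
    and "cn \<omega> = cos (2 * pi * 2 ^ n * expansion \<omega> + \<phi>)" for \<omega>
  have [measurable]: "cm \<in> borel_measurable S" "cn \<in> borel_measurable S"
    unfolding cm_def cn_def by measurable
  have int: "integrable S cm" "integrable S cn" "integrable S (\<lambda>\<omega>. cm \<omega> * cn \<omega>)"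
    unfolding cm_def cn_def by (simp_all add: P.integrable_cos_comp P.integrable_cos_mult_cos_comp)
  have mean: "integral\<^sup>L S cm = mean_cos \<phi>" "integral\<^sup>L S cn = mean_cos \<phi>"
    unfolding cm_def[abs_def] cn_def[abs_def] by (simp_all add: integral_cos_two_pow_expansion)
  have "(\<integral>\<omega>. (cm \<omega> - mean_cos \<phi>) * (cn \<omega> - mean_cos \<phi>) \<partial>S)
      = (\<integral>\<omega>. cm \<omega> * cn \<omega> - mean_cos \<phi> * cn \<omega> - mean_cos \<phi> * cm \<omega> + mean_cos \<phi> * mean_cos \<phi> \<partial>S)"
    by (simp add: algebra_simps)
  also have "\<dots> = (\<integral>\<omega>. cm \<omega> * cn \<omega> \<partial>S) - (mean_cos \<phi>)\<^sup>2"
    using int by (simp add: P.prob_space power2_eq_square mean)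
  also have "\<dots> \<le> 4 * pi * c * (1/2) ^ (if m \<le> n then n - m else m - n)"
  proof (cases "m \<le> n")
    case True
    then show ?thesis
      using abs_integral_cos_mult_cos_sub_le[OF True, of \<phi>] by (simp add: cm_def cn_def power_divide)
  next
    case False
    then show ?thesis
      using abs_integral_cos_mult_cos_sub_le[of n m \<phi>] by (simp add: cm_def cn_def power_divide mult.commute)
  qed
  finally show ?thesis
    by (simp add: cm_def cn_def)
qed

lemma expectation_cos_sum:
  "P.expectation (\<lambda>\<omega>. \<Sum>n<N. cos (2 * pi * 2 ^ n * expansion \<omega> + \<phi>)) = real N * mean_cos \<phi>"
  by (simp add: P.integrable_cos_comp integral_cos_two_pow_expansion)

lemma variance_cos_sum_le:
  "P.variance (\<lambda>\<omega>. \<Sum>n<N. cos (2 * pi * 2 ^ n * expansion \<omega> + \<phi>)) \<le> 12 * pi * c * N"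
proof -
  define g where "g n \<omega> = cos (2 * pi * 2 ^ n * expansion \<omega> + \<phi>) - mean_cos \<phi>" for n \<omega>
  have int: "integrable S (\<lambda>\<omega>. g m \<omega> * g n \<omega>)" for m n
    unfolding g_def left_diff_distrib right_diff_distrib
    by (intro Bochner_Integration.integrable_diff P.integrable_cos_mult_cos_comp
        integrable_mult_right integrable_mult_left P.integrable_cos_comp) simp_all
  have "P.variance (\<lambda>\<omega>. \<Sum>n<N. cos (2 * pi * 2 ^ n * expansion \<omega> + \<phi>)) = (\<integral>\<omega>. (\<Sum>n<N. g n \<omega>)\<^sup>2 \<partial>S)"
    by (simp add: expectation_cos_sum g_def sum_subtractf)
  also have "\<dots> = (\<Sum>m<N. \<Sum>n<N. \<integral>\<omega>. g m \<omega> * g n \<omega> \<partial>S)"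
    by (simp add: power2_eq_square sum_product int)
  also have "\<dots> \<le> (\<Sum>m<N. \<Sum>n<N. 4 * pi * c * (1/2) ^ (if m \<le> n then n - m else m - n))"
    unfolding g_def by (intro sum_mono integral_centered_cos_mult_le)
  also have "\<dots> \<le> (\<Sum>m<N. 4 * pi * c * 3)"
    unfolding sum_distrib_left[symmetric] by (intro sum_mono mult_left_mono sum_power_half_dist_le) simp
  finally show ?thesis
    by (simp add: mult_ac)
qed

lemma prob_cos_sum_deviation_le:
  assumes "0 < t"
  shows "P.prob {\<omega> \<in> space S. t \<le> \<bar>(\<Sum>n<N. cos (2 * pi * 2 ^ n * expansion \<omega> + \<phi>)) - real N * mean_cos \<phi>\<bar>}
           \<le> 12 * pi * c * N / t\<^sup>2"
proof -
  have "integrable S (\<lambda>\<omega>. (\<Sum>n<N. cos (2 * pi * 2 ^ n * expansion \<omega> + \<phi>))\<^sup>2)"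
    unfolding power2_eq_square sum_product by (simp add: P.integrable_cos_mult_cos_comp)
  from P.Chebyshev_inequality[OF _ this assms] show ?thesis
    using variance_cos_sum_le[where N=N and \<phi>=\<phi>] assms
    by (simp add: expectation_cos_sum divide_right_mono order_trans)
qed

lemma integral_cis_expansion_prefix_Suc:
  "(\<integral>\<omega>. cis (t * expansion_prefix (Suc n) \<omega>) \<partial>S)
     = (\<integral>x. cis (t / 2 * d x) \<partial>M) * (\<integral>\<omega>. cis (t / 2 * expansion_prefix n \<omega>) \<partial>S)"
proof -
  interpret MS: pair_prob_space M S
    by (rule pair_prob_space_M_S)
  have "(\<integral>\<omega>. cis (t * expansion_prefix (Suc n) \<omega>) \<partial>S)
      = (\<integral>(x, \<omega>). cis (t / 2 * d x) * cis (t / 2 * expansion_prefix n \<omega>) \<partial>(M \<Otimes>\<^sub>M S))"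
    by (subst integral_case_nat) (simp_all add: expansion_prefix_Suc_case_nat cis_mult algebra_simps)
  also have "\<dots> = (\<integral>x. cis (t / 2 * d x) \<partial>M) * (\<integral>\<omega>. cis (t / 2 * expansion_prefix n \<omega>) \<partial>S)"
    by (intro MS.integral_mult_pair_measure M.integrable_cis_comp P.integrable_cis_comp) simp_all
  finally show ?thesis .
qed

lemma integral_cis_expansion_prefix_neq_0:
  assumes factor: "\<And>j. (\<integral>x. cis (2 * pi * d x / 2 ^ Suc j) \<partial>M) \<noteq> 0"
  shows "(\<integral>\<omega>. cis (2 * pi / 2 ^ j * expansion_prefix n \<omega>) \<partial>S) \<noteq> 0"
proof (induction n arbitrary: j)
  case 0
  then show ?case
    by (simp add: expansion_prefix_def P.prob_space)
next
  case (Suc n)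
  have "2 * pi / 2 ^ j / 2 * d x = 2 * pi * d x / 2 ^ Suc j"
    and "2 * pi / 2 ^ j / 2 * expansion_prefix n \<omega> = 2 * pi / 2 ^ Suc j * expansion_prefix n \<omega>"
    for x \<omega>
    by simp_all
  then show ?case
    unfolding integral_cis_expansion_prefix_Suc using factor[of j] Suc.IH[of "Suc j"] by simp
qed

lemma integral_cis_expansion_neq_0:
  assumes factor: "\<And>j. (\<integral>x. cis (2 * pi * d x / 2 ^ Suc j) \<partial>M) \<noteq> 0"
  shows "(\<integral>\<omega>. cis (2 * pi * expansion \<omega>) \<partial>S) \<noteq> 0"
proof -
  interpret SS: pair_prob_space S S
    by (rule pair_prob_space_S_S)
  obtain s where s: "4 * real c < 2 ^ s"
    using real_arch_pow[of 2 "4 * real c"] by auto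
  have "(\<integral>\<omega>. cis (2 * pi * expansion \<omega>) \<partial>S)
      = (\<integral>(\<omega>, \<omega>'). cis (2 * pi * expansion_prefix s \<omega>) * cis (2 * pi * (expansion \<omega>' / 2 ^ s)) \<partial>(S \<Otimes>\<^sub>M S))"
    by (subst integral_comb_seq[where n=s]) (simp_all add: expansion_comb_seq cis_mult distrib_left)
  also have "\<dots> = (\<integral>\<omega>. cis (2 * pi * expansion_prefix s \<omega>) \<partial>S) * (\<integral>\<omega>'. cis (2 * pi * (expansion \<omega>' / 2 ^ s)) \<partial>S)"
    by (intro SS.integral_mult_pair_measure P.integrable_cis_comp) simp_all
  finally have split: "(\<integral>\<omega>. cis (2 * pi * expansion \<omega>) \<partial>S) = \<dots>" .
  have "(\<integral>\<omega>. cis (2 * pi * expansion_prefix s \<omega>) \<partial>S) \<noteq> 0"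
    using integral_cis_expansion_prefix_neq_0[OF factor, of 0 s] by simp
  moreover have "(\<integral>\<omega>'. cis (2 * pi * (expansion \<omega>' / 2 ^ s)) \<partial>S) \<noteq> 0"
  proof (rule P.integral_cis_neq_0)
    show "\<bar>2 * pi * (expansion \<omega>' / 2 ^ s)\<bar> \<le> 2 * pi * (c / 2 ^ s)" for \<omega>'
      using expansion_nonneg[of \<omega>'] expansion_le[of \<omega>'] by (simp add: divide_right_mono)
    have "real c / 2 ^ s < 1 / 4"
      using s by (simp add: field_simps)
    then show "2 * pi * (c / 2 ^ s) < pi / 2"
      using pi_gt_zero by (simp add: field_simps)
  qed simp
  ultimately show ?thesis
    unfolding split by simp
qed

lemma exists_mean_cos_neq_0:
  assumes factor: "\<And>j. (\<integral>x. cis (2 * pi * d x / 2 ^ Suc j) \<partial>M) \<noteq> 0"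
  shows "\<exists>\<phi>. mean_cos \<phi> \<noteq> 0"
proof (rule ccontr)
  assume "\<nexists>\<phi>. mean_cos \<phi> \<noteq> 0"
  then have "mean_cos 0 = 0" "mean_cos (pi / 2) = 0"
    by auto
  moreover have "Re (\<integral>\<omega>. cis (2 * pi * expansion \<omega>) \<partial>S) = mean_cos 0"
    "Im (\<integral>\<omega>. cis (2 * pi * expansion \<omega>) \<partial>S) = - mean_cos (pi / 2)"
    using integral_Re[OF P.integrable_cis_comp] integral_Im[OF P.integrable_cis_comp]
    by (simp_all add: mean_cos_def cos_add)
  ultimately have "(\<integral>\<omega>. cis (2 * pi * expansion \<omega>) \<partial>S) = 0"
    by (simp add: complex_eq_iff)
  with integral_cis_expansion_neq_0[OF factor] show False ..
qed

lemma measure_distr_cos_sum_small_le: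
  assumes "mean_cos \<phi> \<noteq> 0" "0 < N"
  shows "measure (distr S borel (\<lambda>\<omega>. expansion \<omega> / c))
           (- {x \<in> {0..1}. (real N * \<bar>mean_cos \<phi>\<bar> / 2)\<^sup>2 \<le> (\<Sum>n<N. cos (2 * pi * real (2 ^ n * c) * x + \<phi>))\<^sup>2})
         \<le> 48 * pi * c / (real N * (mean_cos \<phi>)\<^sup>2)"
proof -
  define t where "t = real N * \<bar>mean_cos \<phi>\<bar> / 2"
  have "0 < t"
    using assms by (simp add: t_def)
  let ?E = "{x \<in> {0..1}. t\<^sup>2 \<le> (\<Sum>n<N. cos (2 * pi * real (2 ^ n * c) * x + \<phi>))\<^sup>2}"
  have "?E \<in> sets borel"
    by measurable
  then have "measure (distr S borel (\<lambda>\<omega>. expansion \<omega> / c)) (- ?E)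
      = P.prob ((\<lambda>\<omega>. expansion \<omega> / c) -` (- ?E) \<inter> space S)"
    by (intro measure_distr) auto
  also have "\<dots> \<le> P.prob {\<omega> \<in> space S. t \<le> \<bar>(\<Sum>n<N. cos (2 * pi * 2 ^ n * expansion \<omega> + \<phi>)) - real N * mean_cos \<phi>\<bar>}"
  proof (rule P.finite_measure_mono)
    show "(\<lambda>\<omega>. expansion \<omega> / c) -` (- ?E) \<inter> space S
        \<subseteq> {\<omega> \<in> space S. t \<le> \<bar>(\<Sum>n<N. cos (2 * pi * 2 ^ n * expansion \<omega> + \<phi>)) - real N * mean_cos \<phi>\<bar>}"
    proof
      fix \<omega> assume "\<omega> \<in> (\<lambda>\<omega>. expansion \<omega> / c) -` (- ?E) \<inter> space S"
      then have "\<omega> \<in> space S" and not_E: "expansion \<omega> / c \<notin> ?E"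
        by auto
      let ?T = "\<Sum>n<N. cos (2 * pi * 2 ^ n * expansion \<omega> + \<phi>)"
      have "expansion \<omega> / c \<in> {0..1}"
        using expansion_nonneg[of \<omega>] expansion_le[of \<omega>] c_pos by simp
      moreover have "(\<Sum>n<N. cos (2 * pi * real (2 ^ n * c) * (expansion \<omega> / c) + \<phi>)) = ?T"
        using c_pos by (simp add: ac_simps)
      ultimately have "?T\<^sup>2 < t\<^sup>2"
        using not_E by simp
      then have "\<bar>?T\<bar> < t"
        using power2_less_imp_less[of "\<bar>?T\<bar>" t] \<open>0 < t\<close> by simp
      moreover have "\<bar>real N * mean_cos \<phi>\<bar> = 2 * t"
        by (simp add: t_def abs_mult)
      ultimately have "t \<le> \<bar>?T - real N * mean_cos \<phi>\<bar>"
        by linarith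
      with \<open>\<omega> \<in> space S\<close> show "\<omega> \<in> {\<omega> \<in> space S. t \<le> \<bar>(\<Sum>n<N. cos (2 * pi * 2 ^ n * expansion \<omega> + \<phi>)) - real N * mean_cos \<phi>\<bar>}"
        by blast
    qed
  qed measurable
  also have "\<dots> \<le> 12 * pi * c * N / t\<^sup>2"
    by (rule prob_cos_sum_deviation_le[OF \<open>0 < t\<close>])
  also have "\<dots> = 48 * pi * c / (real N * (mean_cos \<phi>)\<^sup>2)"
    using assms by (simp add: t_def power2_eq_square field_simps)
  finally show ?thesis
    by (simp add: t_def)
qed

theorem singular_lebesgue_distr_expansion:
  assumes factor: "\<And>j. (\<integral>x. cis (2 * pi * d x / 2 ^ Suc j) \<partial>M) \<noteq> 0"
  shows "singular_lebesgue (distr S borel (\<lambda>\<omega>. expansion \<omega> / c))"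
proof -
  obtain \<phi> where mean: "mean_cos \<phi> \<noteq> 0"
    using exists_mean_cos_neq_0[OF factor] by blast
  define K where "K = (mean_cos \<phi>)\<^sup>2"
  define A where "A k = {x \<in> {0..1}. (real (2 ^ k) * \<bar>mean_cos \<phi>\<bar> / 2)\<^sup>2
    \<le> (\<Sum>n<2 ^ k. cos (2 * pi * real (2 ^ n * c) * x + \<phi>))\<^sup>2}" for k
  have "0 < K"
    using mean by (simp add: K_def)
  have geometric: "summable (\<lambda>k. C * (1/2::real) ^ k)" for C
    by (intro summable_mult summable_geometric) simp
  have A_lborel: "measure lborel (A k) \<le> 2 / K * (1/2) ^ k" for k
  proof -
    have "inj_on (\<lambda>n. 2 ^ n * c) {..<2 ^ k}"
      using c_pos by (auto intro!: inj_onI)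
    then have "measure lborel (A k) \<le> real (2 ^ k) / (2 * (real (2 ^ k) * \<bar>mean_cos \<phi>\<bar> / 2)\<^sup>2)"
      unfolding A_def using c_pos mean by (intro measure_cos_sum_squared_ge_le) auto
    also have "\<dots> = 2 / K * (1/2) ^ k"
      by (simp add: K_def power2_eq_square power_one_over power_abs[symmetric] field_simps)
    finally show ?thesis .
  qed
  have A_distr: "measure (distr S borel (\<lambda>\<omega>. expansion \<omega> / c)) (- A k) \<le> 48 * pi * c / K * (1/2) ^ k" for k
  proof -
    have "measure (distr S borel (\<lambda>\<omega>. expansion \<omega> / c)) (- A k) \<le> 48 * pi * c / (real (2 ^ k) * K)"
      unfolding A_def K_def by (rule measure_distr_cos_sum_small_le[OF mean]) simp
    also have "\<dots> = 48 * pi * c / K * (1/2) ^ k"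
      by (simp add: power_one_over)
    finally show ?thesis .
  qed
  show ?thesis
  proof (rule singular_lebesgueI_summable)
    show "A k \<in> sets borel" for k
      unfolding A_def by measurable
    show "emeasure lborel (A k) < \<infinity>" for k
    proof -
      have "emeasure lborel (A k) \<le> emeasure lborel {0..1::real}"
        unfolding A_def by (intro emeasure_mono) auto
      then have "emeasure lborel (A k) \<le> 1"
        by simp
      then show ?thesis
        by (metis ennreal_one_less_top infinity_ennreal_def le_less_trans)
    qed
    show "summable (\<lambda>k. measure lborel (A k))"
      by (rule summable_comparison_test'[OF geometric[of "2 / K"]]) (use A_lborel in auto)
    show "summable (\<lambda>k. measure (distr S borel (\<lambda>\<omega>. expansion \<omega> / c)) (- A k))"
      by (rule summable_comparison_test'[OF geometric[of "48 * pi * c / K"]]) (use A_distr in auto)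
    show "finite_measure (distr S borel (\<lambda>\<omega>. expansion \<omega> / c))"
      by (rule P.finite_measure_distr) simp
  qed simp
qed

end

lemma dyadic_expansion_digit:
  assumes "0 < q" "p \<le> q"
  shows "dyadic_expansion (uniform_count_measure {0::nat, 1, 2}) (\<lambda>k. real q * digit p q k) q"
proof -
  let ?U = "uniform_count_measure {0::nat, 1, 2}"
  have "prob_space ?U"
    by (rule prob_space_uniform_count_measure) auto
  then have "sequence_space ?U"
    by (simp add: sequence_space_def product_prob_space_def product_sigma_finite_def
        product_prob_space_axioms_def prob_space_imp_sigma_finite)
  moreover have "borel_measurable ?U = borel_measurable (count_space {0::nat, 1, 2})"
    by (rule measurable_cong_sets[OF sets_uniform_count_measure_count_space]) simp
  ultimately show ?thesis
    using assms borel_measurable_count_space[of "\<lambda>k. real q * digit p q k" "{0::nat, 1, 2}"]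
    by (auto simp: dyadic_expansion_def dyadic_expansion_axioms_def digit_def)
qed

lemma integral_cis_digit_neq_0:
  assumes "0 < q"
  shows "(\<integral>x. cis (2 * pi * (real q * digit p q x) / 2 ^ Suc j) \<partial>uniform_count_measure {0::nat, 1, 2}) \<noteq> 0"
proof -
  have integral: "(\<integral>x. cis (2 * pi * (real q * digit p q x) / 2 ^ Suc j) \<partial>uniform_count_measure {0::nat, 1, 2})
      = (1 + cis (2 * pi * real q / 2 ^ Suc j) + cis (2 * pi * real p / 2 ^ Suc j)) / 3"
    unfolding uniform_count_measure_def using assms
    by (subst lebesgue_integral_point_measure_finite)
       (simp_all add: digit_def add_divide_distrib scaleR_conv_of_real)
  moreover have "1 + cis (2 * pi * real q / 2 ^ Suc j) + cis (2 * pi * real p / 2 ^ Suc j) \<noteq> 0"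
    using one_add_cis_add_cis_eq_0_imp_cos cos_two_pi_dyadic_neq_minus_half by blast
  ultimately show ?thesis
    unfolding integral by simp
qed

theorem theorem4p1:
  fixes p q :: nat
  assumes "coprime p q" and "q > 0" and "p \<le> q"
  shows "singular_lebesgue (mu p q)"
proof -
  interpret dyadic_expansion "uniform_count_measure {0::nat, 1, 2}" "\<lambda>k. real q * digit p q k" q
    using assms(2,3) by (rule dyadic_expansion_digit)
  have "expansion \<omega> / q = (\<Sum>i. digit p q (\<omega> i) / 2 ^ Suc i)" for \<omega>
  proof -
    have "expansion \<omega> / q = (\<Sum>i. real q * digit p q (\<omega> i) / 2 ^ Suc i / q)"
      unfolding expansion_def by (rule suminf_divide[OF summable_expansion, symmetric])
    also have "\<dots> = (\<Sum>i. digit p q (\<omega> i) / 2 ^ Suc i)"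
      using \<open>q > 0\<close> by simp
    finally show ?thesis .
  qed
  then have "mu p q = distr S borel (\<lambda>\<omega>. expansion \<omega> / q)"
    by (simp add: mu_def)
  then show ?thesis
    using singular_lebesgue_distr_expansion[OF integral_cis_digit_neq_0[OF \<open>q > 0\<close>]] by simp
qed

end
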